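(* If a mechanism $(f,p)$ is incentive compatible, then $p(0,k)=p(0,1)$ for all $k\in K$.
   Context: An agent has private type $(v,k)\in V\times K$, $V=[0,1]$, $K=(0,1]$, and from an outcome $(a_1,a_2,t)$ with $a_1,a_2\in[0,1]$ and $t\in\mathbb{R}$ (payment by the agent) gets utility $U_{(v,k)}(a_1,a_2,t)=v\min\{a_1/k,a_2\}-t$. A mechanism is a pair $(f,p)$ with $f=(f_1,f_2):V\times K\to[0,1]^2$, $p:V\times K\to\mathbb{R}$. It is incentive compatible if $U_{(v,k)}(f(v,k),p(v,k))\ge U_{(v,k)}(f(v',k'),p(v',k'))$ for all types $(v,k),(v',k')$. *)

theory Defs
  imports Complex_Main
begin

definition Vset :: "real set" where "Vset = {0..1}"
definition Kset :: "real set" where "Kset = {0<..1}"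

definition util :: "real \<Rightarrow> real \<Rightarrow> real \<Rightarrow> real \<Rightarrow> real \<Rightarrow> real" where
  "util v k a1 a2 t = v * min (a1 / k) a2 - t"

definition mechanism :: "(real \<Rightarrow> real \<Rightarrow> real \<times> real) \<Rightarrow> (real \<Rightarrow> real \<Rightarrow> real) \<Rightarrow> bool" where
  "mechanism f p \<longleftrightarrow> (\<forall>v\<in>Vset. \<forall>k\<in>Kset.
      fst (f v k) \<in> {0..1} \<and> snd (f v k) \<in> {0..1})"

definition incentive_compatible :: "(real \<Rightarrow> real \<Rightarrow> real \<times> real) \<Rightarrow> (real \<Rightarrow> real \<Rightarrow> real) \<Rightarrow> bool" where
  "incentive_compatible f p \<longleftrightarrow> (\<forall>v\<in>Vset. \<forall>k\<in>Kset. \<forall>v'\<in>Vset. \<forall>k'\<in>Kset.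
      util v k (fst (f v k)) (snd (f v k)) (p v k) \<ge> util v k (fst (f v' k')) (snd (f v' k')) (p v' k'))"

end

theory Submission
  imports Defs
begin

lemma util_zero_value [simp]: "util 0 k a1 a2 t = - t"
  by (simp add: util_def)

text \<open>A type with value 0 is indifferent between all allocations, so incentive compatibility,
  applied in both directions, forces all such types to pay the same.\<close>

lemma incentive_compatible_zero_value_payment_eq:
  assumes "incentive_compatible f p" and "k \<in> Kset" and "k' \<in> Kset"
  shows "p 0 k = p 0 k'"
proof -
  have zero_in_V: "(0::real) \<in> Vset"
    by (simp add: Vset_def)
  have "p 0 k \<le> p 0 k'" and "p 0 k' \<le> p 0 k"
    using assms zero_in_V unfolding incentive_compatible_def by force+
  then show ?thesis
    by linarith
qed

theorem lemma1:
  fixes f :: "real \<Rightarrow> real \<Rightarrow> real \<times> real" and p :: "real \<Rightarrow> real \<Rightarrow> real"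
  assumes "mechanism f p" and "incentive_compatible f p"
  shows "\<forall>k\<in>Kset. p 0 k = p 0 1"
proof
  fix k assume "k \<in> Kset"
  moreover have "(1::real) \<in> Kset"
    by (simp add: Kset_def)
  ultimately show "p 0 k = p 0 1"
    using incentive_compatible_zero_value_payment_eq[OF assms(2)] by blast
qed

end
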